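(* Let $T$ be a tree rooted at a vertex $v$ such that every vertex $u\in V(T)\setminus\{v\}$ satisfies $d_T(u)\le 2$. Then (a) $v\in\mathcal{A}(T)$ if and only if $|C^2(v)|=0$ and $|C^1(v)|\le 1$; (b) $v\in\mathcal{N}(T)$ if and only if $|C^2(v)|=2$ or $|C^1(v)|+|C^2(v)|\ge 3$.
   Context: All graphs are finite, simple and undirected. A dissociation set of a graph $G$ is a set $F\subseteq V(G)$ such that $G[F]$ has maximum degree at most $1$; a maximum dissociation set is one of maximum cardinality. $\mathcal{A}(G)$ is the set of vertices of $G$ contained in every maximum dissociation set of $G$, and $\mathcal{N}(G)$ is the set of vertices of $G$ contained in no maximum dissociation set of $G$. In a tree $T$ rooted at $v$, $C(v)$ denotes the set of children of $v$, and for a vertex $w$, $T_w$ denotes the subtree induced by $w$ and all its descendants. Under the hypothesis that all non-root vertices have degree at most $2$, for each child $w$ of $v$ the subtree $T_w$ is a path having $w$ as an end vertex. For $i\in\{0,1,2\}$, $C^i(v)$ denotes the set of children $w\in C(v)$ such that the number of vertices of the path $T_w$ is congruent to $i$ modulo $3$. *)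

theory Defs
  imports Main
begin

definition simple_graph :: "'a set \<Rightarrow> ('a \<Rightarrow> 'a \<Rightarrow> bool) \<Rightarrow> bool" where
  "simple_graph V E \<longleftrightarrow> finite V \<and> (\<forall>u w. E u w \<longrightarrow> u \<in> V \<and> w \<in> V)
     \<and> (\<forall>u w. E u w \<longrightarrow> E w u) \<and> (\<forall>u. \<not> E u u)"

definition degree :: "'a set \<Rightarrow> ('a \<Rightarrow> 'a \<Rightarrow> bool) \<Rightarrow> 'a \<Rightarrow> nat" where
  "degree V E u = card {w \<in> V. E u w}"

definition reach_in :: "'a set \<Rightarrow> ('a \<Rightarrow> 'a \<Rightarrow> bool) \<Rightarrow> 'a \<Rightarrow> 'a \<Rightarrow> bool" where
  "reach_in S E = (\<lambda>x y. x \<in> S \<and> y \<in> S \<and> E x y)\<^sup>*\<^sup>*"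

definition connected_graph :: "'a set \<Rightarrow> ('a \<Rightarrow> 'a \<Rightarrow> bool) \<Rightarrow> bool" where
  "connected_graph V E \<longleftrightarrow> V \<noteq> {} \<and> (\<forall>x\<in>V. \<forall>y\<in>V. reach_in V E x y)"

definition is_cycle :: "'a set \<Rightarrow> ('a \<Rightarrow> 'a \<Rightarrow> bool) \<Rightarrow> 'a list \<Rightarrow> bool" where
  "is_cycle V E cs \<longleftrightarrow> length cs \<ge> 3 \<and> distinct cs \<and> set cs \<subseteq> V
     \<and> (\<forall>i. Suc i < length cs \<longrightarrow> E (cs ! i) (cs ! Suc i)) \<and> E (last cs) (hd cs)"

definition is_tree :: "'a set \<Rightarrow> ('a \<Rightarrow> 'a \<Rightarrow> bool) \<Rightarrow> bool" where
  "is_tree V E \<longleftrightarrow> simple_graph V E \<and> connected_graph V E \<and> (\<nexists>cs. is_cycle V E cs)"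

definition dissociation_set :: "'a set \<Rightarrow> ('a \<Rightarrow> 'a \<Rightarrow> bool) \<Rightarrow> 'a set \<Rightarrow> bool" where
  "dissociation_set V E F \<longleftrightarrow> F \<subseteq> V \<and> (\<forall>x\<in>F. card {y \<in> F. E x y} \<le> 1)"

definition max_dissociation_set :: "'a set \<Rightarrow> ('a \<Rightarrow> 'a \<Rightarrow> bool) \<Rightarrow> 'a set \<Rightarrow> bool" where
  "max_dissociation_set V E F \<longleftrightarrow> dissociation_set V E F
     \<and> (\<forall>F'. dissociation_set V E F' \<longrightarrow> card F' \<le> card F)"

definition diss_A :: "'a set \<Rightarrow> ('a \<Rightarrow> 'a \<Rightarrow> bool) \<Rightarrow> 'a set" where
  "diss_A V E = {x \<in> V. \<forall>F. max_dissociation_set V E F \<longrightarrow> x \<in> F}"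

definition diss_N :: "'a set \<Rightarrow> ('a \<Rightarrow> 'a \<Rightarrow> bool) \<Rightarrow> 'a set" where
  "diss_N V E = {x \<in> V. \<forall>F. max_dissociation_set V E F \<longrightarrow> x \<notin> F}"

text \<open>Rooted at v: the children of v are its neighbours; for a child w, T_w consists of the
  vertices reachable from w in T - v (i.e. w and its descendants).\<close>
definition children :: "'a set \<Rightarrow> ('a \<Rightarrow> 'a \<Rightarrow> bool) \<Rightarrow> 'a \<Rightarrow> 'a set" where
  "children V E v = {w \<in> V. E v w}"

definition subtree_child :: "'a set \<Rightarrow> ('a \<Rightarrow> 'a \<Rightarrow> bool) \<Rightarrow> 'a \<Rightarrow> 'a \<Rightarrow> 'a set" where
  "subtree_child V E v w = {u \<in> V - {v}. reach_in (V - {v}) E w u}"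

definition children_mod :: "'a set \<Rightarrow> ('a \<Rightarrow> 'a \<Rightarrow> bool) \<Rightarrow> 'a \<Rightarrow> nat \<Rightarrow> 'a set" where
  "children_mod V E v i = {w \<in> children V E v. card (subtree_child V E v w) mod 3 = i}"

end

theory Submission
  imports Defs "HOL-Library.Transitive_Closure_Table"
begin

text \<open>
  Deleting the root \<open>v\<close> splits \<open>T\<close> into the paths \<open>T\<^sub>w\<close>, \<open>w \<in> C(v)\<close>, each attached
  to \<open>v\<close> by its end vertex \<open>w\<close>. A path on \<open>n\<close> vertices has dissociation number
  \<open>f(n) = n - \<lfloor>n/3\<rfloor>\<close>; forbidding its end vertex lowers this to \<open>f(n - 1)\<close>, while keeping
  the end vertex without a neighbour gives \<open>1 + f(n - 2)\<close>.
  So a largest dissociation set avoiding \<open>v\<close> has \<open>\<Sum>\<^sub>w f(|T\<^sub>w|)\<close> vertices. One containing \<open>v\<close>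
  may keep at most one child, as the partner of \<open>v\<close>, and keeping it pays off exactly when
  \<open>|T\<^sub>w| \<equiv> 1 (mod 3)\<close>; so it has \<open>1 + \<Sum>\<^sub>w f(|T\<^sub>w| - 1) + [C\<^sup>1(v) \<noteq> \<emptyset>]\<close> vertices.
  As \<open>f(n) - f(n - 1) = [n \<not>\<equiv> 0 (mod 3)]\<close>, the root lies in every (in no) maximum
  dissociation set iff the second number is larger (smaller) than the first, which is
  \<open>\<Sum>\<^sub>w f(|T\<^sub>w| - 1) + |C\<^sup>1(v)| + |C\<^sup>2(v)|\<close>.
\<close>

section \<open>Dissociated sets\<close>

definition dissociated :: "('a \<Rightarrow> 'a \<Rightarrow> bool) \<Rightarrow> 'a set \<Rightarrow> bool" where
  "dissociated E S \<longleftrightarrow> finite S \<and> (\<forall>x\<in>S. card {y \<in> S. E x y} \<le> 1)"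

lemma dissociation_set_iff:
  "finite V \<Longrightarrow> dissociation_set V E F \<longleftrightarrow> F \<subseteq> V \<and> dissociated E F"
  unfolding dissociation_set_def dissociated_def by (auto intro: finite_subset)

lemma dissociated_empty [simp]: "dissociated E {}"
  by (simp add: dissociated_def)

lemma dissociated_subset:
  assumes "dissociated E S" "T \<subseteq> S"
  shows "dissociated E T"
  unfolding dissociated_def
proof (intro conjI ballI)
  show "finite T"
    using assms finite_subset unfolding dissociated_def by blast
  fix x assume "x \<in> T"
  have "card {y \<in> T. E x y} \<le> card {y \<in> S. E x y}"
    using assms by (intro card_mono) (auto simp: dissociated_def)
  also have "\<dots> \<le> 1"
    using assms \<open>x \<in> T\<close> by (auto simp: dissociated_def)
  finally show "card {y \<in> T. E x y} \<le> 1" .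
qed

lemma dissociated_partner_unique:
  assumes "dissociated E S" "x \<in> S" "y \<in> S" "E x y" "z \<in> S" "E x z"
  shows "z = y"
proof -
  have "finite {u \<in> S. E x u}" "card {u \<in> S. E x u} \<le> Suc 0"
    using assms(1,2) by (auto simp: dissociated_def)
  then show ?thesis
    using assms(3-) card_le_Suc0_iff_eq by blast
qed

lemma card_le_1_if_subset_singleton: "A \<subseteq> {a} \<Longrightarrow> card A \<le> 1"
  using card_mono[of "{a}" A] by simp

lemma dissociated_insert_isolated:
  assumes "symp E" "dissociated E S" "\<forall>y\<in>S. \<not> E x y"
  shows "dissociated E (insert x S)"
  unfolding dissociated_def
proof (intro conjI ballI)
  show "finite (insert x S)"
    using assms(2) by (simp add: dissociated_def)
  fix z assume "z \<in> insert x S"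
  show "card {y \<in> insert x S. E z y} \<le> 1"
  proof (cases "z = x")
    case True
    then show ?thesis
      using assms(3) by (intro card_le_1_if_subset_singleton[of _ x]) auto
  next
    case False
    with \<open>z \<in> insert x S\<close> have "z \<in> S" by simp
    moreover have "{y \<in> insert x S. E z y} = {y \<in> S. E z y}"
      using assms(1,3) \<open>z \<in> S\<close> by (auto dest: sympD)
    ultimately show ?thesis
      using assms(2) by (simp add: dissociated_def)
  qed
qed

lemma dissociated_insert_pendant:
  assumes "symp E" "irreflp E" "dissociated E S" "a \<in> S" "\<forall>y\<in>S. \<not> E a y"
    and "\<forall>y\<in>S. E x y \<longrightarrow> y = a"
  shows "dissociated E (insert x S)"
  unfolding dissociated_def
proof (intro conjI ballI)
  show "finite (insert x S)"
    using assms(3) by (simp add: dissociated_def)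
  fix z assume z: "z \<in> insert x S"
  consider "z = x" | "z = a" | "z \<in> S" "z \<noteq> a" "z \<noteq> x"
    using z by blast
  then show "card {y \<in> insert x S. E z y} \<le> 1"
  proof cases
    case 1
    then show ?thesis
      using assms(2,6) by (intro card_le_1_if_subset_singleton[of _ a]) (auto dest: irreflpD)
  next
    case 2
    then show ?thesis
      using assms(5) by (intro card_le_1_if_subset_singleton[of _ x]) auto
  next
    case 3
    have "{y \<in> insert x S. E z y} = {y \<in> S. E z y}"
      using assms(1,6) 3 by (auto dest: sympD)
    then show ?thesis
      using assms(3) 3 by (simp add: dissociated_def)
  qed
qed

lemma dissociated_UN:
  assumes "finite I" "\<And>i. i \<in> I \<Longrightarrow> dissociated E (G i)"
    and "\<And>i j x y. i \<in> I \<Longrightarrow> j \<in> I \<Longrightarrow> x \<in> G i \<Longrightarrow> y \<in> G j \<Longrightarrow> E x y \<Longrightarrow> i = j"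
  shows "dissociated E (\<Union>i\<in>I. G i)"
  unfolding dissociated_def
proof (intro conjI ballI)
  show "finite (\<Union>i\<in>I. G i)"
    using assms(1,2) by (auto simp: dissociated_def)
  fix x assume "x \<in> (\<Union>i\<in>I. G i)"
  then obtain i where i: "i \<in> I" "x \<in> G i" by blast
  have "{y \<in> (\<Union>i\<in>I. G i). E x y} = {y \<in> G i. E x y}"
    using assms(3) i by blast
  then show "card {y \<in> (\<Union>i\<in>I. G i). E x y} \<le> 1"
    using assms(2) i by (simp add: dissociated_def)
qed

section \<open>Vertices in all or in no maximum dissociation set\<close>

definition max_diss_card :: "'a set \<Rightarrow> ('a \<Rightarrow> 'a \<Rightarrow> bool) \<Rightarrow> ('a set \<Rightarrow> bool) \<Rightarrow> nat \<Rightarrow> bool" where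
  "max_diss_card V E P k \<longleftrightarrow> (\<exists>F. dissociation_set V E F \<and> P F \<and> card F = k)
     \<and> (\<forall>F. dissociation_set V E F \<longrightarrow> P F \<longrightarrow> card F \<le> k)"

lemma max_dissociation_set_iff_split:
  assumes "max_diss_card V E (\<lambda>F. v \<notin> F) a" "max_diss_card V E (\<lambda>F. v \<in> F) b"
  shows "max_dissociation_set V E F \<longleftrightarrow> dissociation_set V E F \<and> card F = max a b"
proof -
  have "card F \<le> max a b" if "dissociation_set V E F" for F
    using assms that unfolding max_diss_card_def by (cases "v \<in> F") force+
  moreover have "\<exists>F. dissociation_set V E F \<and> card F = max a b"
    using assms unfolding max_diss_card_def by (metis max_def)
  ultimately show ?thesis
    unfolding max_dissociation_set_def by (metis le_antisym)
qed

lemma mem_diss_A_iff: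
  assumes "v \<in> V" "max_diss_card V E (\<lambda>F. v \<notin> F) a" "max_diss_card V E (\<lambda>F. v \<in> F) b"
  shows "v \<in> diss_A V E \<longleftrightarrow> a < b"
proof
  assume "v \<in> diss_A V E"
  obtain F where F: "dissociation_set V E F" "card F = a" and "v \<notin> F"
    using assms(2) unfolding max_diss_card_def by blast
  show "a < b"
  proof (rule ccontr)
    assume "\<not> a < b"
    with F have "max_dissociation_set V E F"
      unfolding max_dissociation_set_iff_split[OF assms(2,3)] by simp
    with \<open>v \<in> diss_A V E\<close> \<open>v \<notin> F\<close> show False
      unfolding diss_A_def by blast
  qed
next
  assume "a < b"
  have "v \<in> F" if "max_dissociation_set V E F" for F
    using that assms(2) \<open>a < b\<close> unfolding max_dissociation_set_iff_split[OF assms(2,3)] max_diss_card_def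
    by fastforce
  with assms(1) show "v \<in> diss_A V E"
    unfolding diss_A_def by blast
qed

lemma mem_diss_N_iff:
  assumes "v \<in> V" "max_diss_card V E (\<lambda>F. v \<notin> F) a" "max_diss_card V E (\<lambda>F. v \<in> F) b"
  shows "v \<in> diss_N V E \<longleftrightarrow> b < a"
proof
  assume "v \<in> diss_N V E"
  obtain F where F: "dissociation_set V E F" "card F = b" and "v \<in> F"
    using assms(3) unfolding max_diss_card_def by blast
  show "b < a"
  proof (rule ccontr)
    assume "\<not> b < a"
    with F have "max_dissociation_set V E F"
      unfolding max_dissociation_set_iff_split[OF assms(2,3)] by simp
    with \<open>v \<in> diss_N V E\<close> \<open>v \<in> F\<close> show False
      unfolding diss_N_def by blast
  qed
next
  assume "b < a"
  have "v \<notin> F" if "max_dissociation_set V E F" for F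
    using that assms(3) \<open>b < a\<close> unfolding max_dissociation_set_iff_split[OF assms(2,3)] max_diss_card_def
    by fastforce
  with assms(1) show "v \<in> diss_N V E"
    unfolding diss_N_def by blast
qed

section \<open>The dissociation number\<close>

definition diss_number :: "('a \<Rightarrow> 'a \<Rightarrow> bool) \<Rightarrow> 'a set \<Rightarrow> nat" where
  "diss_number E X = Max {card S |S. S \<subseteq> X \<and> dissociated E S}"

lemma finite_diss_cards:
  assumes "finite X"
  shows "finite {card S |S. S \<subseteq> X \<and> dissociated E S}"
proof (rule finite_subset)
  show "{card S |S. S \<subseteq> X \<and> dissociated E S} \<subseteq> card ` Pow X"
    by blast
qed (use assms in simp)

lemma diss_number_ge:
  assumes "finite X" "S \<subseteq> X" "dissociated E S"
  shows "card S \<le> diss_number E X"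
  unfolding diss_number_def
  by (rule Max_ge[OF finite_diss_cards[OF assms(1)]]) (use assms(2,3) in blast)

lemma diss_number_witness:
  assumes "finite X"
  obtains S where "S \<subseteq> X" "dissociated E S" "card S = diss_number E X"
proof -
  have "card {} \<in> {card S |S. S \<subseteq> X \<and> dissociated E S}"
    by (intro CollectI exI[of _ "{}"]) simp
  then have "diss_number E X \<in> {card S |S. S \<subseteq> X \<and> dissociated E S}"
    unfolding diss_number_def by (intro Max_in finite_diss_cards assms) blast
  then show ?thesis
    using that by (elim CollectE exE) (elim conjE, metis)
qed

lemma diss_number_le:
  assumes "finite X" "\<And>S. S \<subseteq> X \<Longrightarrow> dissociated E S \<Longrightarrow> card S \<le> k"
  shows "diss_number E X \<le> k"
proof -
  obtain S where "S \<subseteq> X" "dissociated E S" "card S = diss_number E X"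
    using diss_number_witness[OF assms(1)] .
  then show ?thesis
    using assms(2)[of S] by simp
qed

lemma diss_number_mono:
  assumes "finite Y" "X \<subseteq> Y"
  shows "diss_number E X \<le> diss_number E Y"
proof -
  obtain S where "S \<subseteq> X" "dissociated E S" "card S = diss_number E X"
    using diss_number_witness[OF finite_subset[OF assms(2,1)]] .
  with assms show ?thesis
    using diss_number_ge[of Y S E] by simp
qed

lemma diss_number_empty [simp]: "diss_number E {} = 0"
  using diss_number_le[of "{}" E 0] by simp

lemma diss_number_singleton [simp]: "symp E \<Longrightarrow> diss_number E {w} = 1"
proof (rule antisym)
  show "diss_number E {w} \<le> 1"
    by (rule diss_number_le) (auto simp: subset_singleton_iff)
  assume "symp E"
  then have "dissociated E {w}"
    using dissociated_insert_isolated[of E "{}"] by simp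
  then show "1 \<le> diss_number E {w}"
    using diss_number_ge[of "{w}" "{w}"] by simp
qed

lemma Suc_diss_number_le_insert_isolated:
  assumes "symp E" "finite X" "x \<notin> X" "\<forall>y\<in>X. \<not> E x y"
  shows "Suc (diss_number E X) \<le> diss_number E (insert x X)"
proof -
  obtain S where S: "S \<subseteq> X" "dissociated E S" "card S = diss_number E X"
    using diss_number_witness[OF assms(2)] .
  have "finite S"
    using finite_subset[OF S(1) assms(2)] .
  have "x \<notin> S"
    using S(1) assms(3) by blast
  then have "card (insert x S) = Suc (diss_number E X)"
    using \<open>finite S\<close> S(3) by simp
  moreover have "dissociated E (insert x S)"
    using S(1) assms(4) by (intro dissociated_insert_isolated[OF assms(1) S(2)]) blast
  ultimately show ?thesis
    using S(1) assms(2) diss_number_ge[of "insert x X" "insert x S" E] by auto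
qed

lemma Suc_Suc_diss_number_le_insert_edge:
  assumes sym: "symp E" and irr: "irreflp E" and fin: "finite X"
    and "x \<notin> insert a X" "a \<notin> X" "E x a" "\<forall>y\<in>X. \<not> E x y \<and> \<not> E a y"
  shows "Suc (Suc (diss_number E X)) \<le> diss_number E (insert x (insert a X))"
proof -
  obtain S where S: "S \<subseteq> X" "dissociated E S" "card S = diss_number E X"
    using diss_number_witness[OF fin] .
  have "finite S"
    using finite_subset[OF S(1) fin] .
  have "x \<notin> insert a S" "a \<notin> S"
    using S(1) assms(4,5) by blast+
  then have "card (insert x (insert a S)) = Suc (Suc (diss_number E X))"
    using \<open>finite S\<close> S(3) by simp
  moreover have "dissociated E (insert a S)"
    using S(1) assms(7) by (intro dissociated_insert_isolated[OF sym S(2)]) blast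
  then have "dissociated E (insert x (insert a S))"
    using S(1) assms(7) irr
    by (intro dissociated_insert_pendant[OF sym irr _ insertI1]) (auto dest: irreflpD)
  ultimately show ?thesis
    using S(1) fin diss_number_ge[of "insert x (insert a X)" "insert x (insert a S)" E] by auto
qed

section \<open>Pendant paths\<close>

lemma diss_number_insert_pendant_le:
  assumes sym: "symp E" and fin: "finite K" and u: "u \<in> K" and w: "w \<notin> K" "E w u"
  shows "diss_number E (insert w K) \<le>
    max (diss_number E K)
      (max (Suc (diss_number E (K - {u}))) (Suc (Suc (diss_number E (K - insert u {y. E u y})))))"
    (is "_ \<le> max ?d (max (Suc ?d1) (Suc (Suc ?d2)))")
proof (rule diss_number_le)
  show "finite (insert w K)"
    using fin by simp
  fix S assume S: "S \<subseteq> insert w K" "dissociated E S"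
  have finS: "finite S"
    using S(2) by (simp add: dissociated_def)
  consider "w \<notin> S" | "w \<in> S" "u \<notin> S" | "w \<in> S" "u \<in> S"
    by blast
  then show "card S \<le> max ?d (max (Suc ?d1) (Suc (Suc ?d2)))"
  proof cases
    case 1
    then have "card S \<le> ?d"
      using S fin by (intro diss_number_ge) auto
    then show ?thesis by simp
  next
    case 2
    have "dissociated E (S - {w})"
      using S(2) by (rule dissociated_subset) blast
    then have "card (S - {w}) \<le> ?d1"
      using S(1) fin 2 by (intro diss_number_ge) auto
    then show ?thesis
      using card.remove[OF finS \<open>w \<in> S\<close>] by simp
  next
    case 3
    \<comment> \<open>\<open>w\<close> is the partner of \<open>u\<close> in \<open>S\<close>, so the rest of \<open>S\<close> avoids the neighbours of \<open>u\<close>.\<close>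
    have "E u w"
      using sym w(2) by (rule sympD)
    then have "S - {w} - {u} \<subseteq> K - insert u {y. E u y}"
      using S dissociated_partner_unique[OF S(2) \<open>u \<in> S\<close> \<open>w \<in> S\<close>] by blast
    moreover have "dissociated E (S - {w} - {u})"
      using S(2) by (rule dissociated_subset) blast
    ultimately have "card (S - {w} - {u}) \<le> ?d2"
      using fin by (intro diss_number_ge) auto
    moreover have "card (S - {w}) = Suc (card (S - {w} - {u}))"
      using 3 u w(1) finS by (intro card.remove) auto
    ultimately show ?thesis
      using card.remove[OF finS \<open>w \<in> S\<close>] by simp
  qed
qed

lemma diss_number_insert_pendant:
  assumes sym: "symp E" and irr: "irreflp E" and fin: "finite K"
    and u: "u \<in> K" and w: "w \<notin> K" and adj_w: "\<forall>y\<in>K. E w y \<longleftrightarrow> y = u"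
  shows "diss_number E (insert w K) =
    max (diss_number E K)
      (max (Suc (diss_number E (K - {u}))) (Suc (Suc (diss_number E (K - insert u {y. E u y})))))"
proof (rule antisym)
  have "E w u"
    using adj_w u by blast
  then show "diss_number E (insert w K) \<le> max (diss_number E K)
      (max (Suc (diss_number E (K - {u}))) (Suc (Suc (diss_number E (K - insert u {y. E u y})))))"
    using diss_number_insert_pendant_le[OF sym fin u w] by blast
  have fin': "finite (insert w K)"
    using fin by simp
  have "diss_number E K \<le> diss_number E (insert w K)"
    using fin' by (rule diss_number_mono) blast
  moreover have "Suc (diss_number E (K - {u})) \<le> diss_number E (insert w K)"
    using Suc_diss_number_le_insert_isolated[OF sym, of "K - {u}" w] fin w adj_w
      diss_number_mono[OF fin', of "insert w (K - {u})" E]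
    by fastforce
  moreover have "Suc (Suc (diss_number E (K - insert u {y. E u y}))) \<le> diss_number E (insert w K)"
    using Suc_Suc_diss_number_le_insert_edge[OF sym irr, of "K - insert u {y. E u y}" w u]
      fin u w adj_w \<open>E w u\<close> diss_number_mono[OF fin', of "insert w (insert u (K - insert u {y. E u y}))" E]
    by fastforce
  ultimately show "max (diss_number E K)
      (max (Suc (diss_number E (K - {u}))) (Suc (Suc (diss_number E (K - insert u {y. E u y})))))
    \<le> diss_number E (insert w K)"
    by simp
qed

text \<open>The dissociation number \<open>n - \<lfloor>n/3\<rfloor>\<close> of a path on \<open>n\<close> vertices.\<close>
fun path_diss_num :: "nat \<Rightarrow> nat" where
  "path_diss_num 0 = 0"
| "path_diss_num (Suc 0) = 1"
| "path_diss_num (Suc (Suc 0)) = 2"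
| "path_diss_num (Suc (Suc (Suc n))) = path_diss_num n + 2"

lemma path_diss_num_Suc_eq:
  "path_diss_num (Suc n) = path_diss_num n + of_bool (Suc n mod 3 \<noteq> 0)"
  by (induction n rule: path_diss_num.induct) (auto simp: mod_Suc)

lemma path_diss_num_Suc:
  "1 \<le> m \<Longrightarrow> path_diss_num (Suc m) =
     max (path_diss_num m) (max (Suc (path_diss_num (m - 1))) (Suc (Suc (path_diss_num (m - 2)))))"
  by (cases m rule: path_diss_num.cases) (auto simp: path_diss_num_Suc_eq mod_Suc)

lemma path_diss_num_diff1:
  "1 \<le> n \<Longrightarrow> path_diss_num n = path_diss_num (n - 1) + of_bool (n mod 3 \<noteq> 0)"
  by (cases n) (auto simp: path_diss_num_Suc_eq)

lemma path_diss_num_diff2: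
  "1 \<le> n \<Longrightarrow> Suc (path_diss_num (n - 2)) = path_diss_num (n - 1) + of_bool (n mod 3 = 1)"
  by (cases n rule: path_diss_num.cases) (auto simp: path_diss_num_Suc_eq mod_Suc)

inductive pendant_path :: "('a \<Rightarrow> 'a \<Rightarrow> bool) \<Rightarrow> 'a set \<Rightarrow> 'a \<Rightarrow> bool" for E where
  singleton: "pendant_path E {w} w"
| extend: "pendant_path E K u \<Longrightarrow> w \<notin> K \<Longrightarrow> \<forall>y\<in>K. E w y \<longleftrightarrow> y = u
    \<Longrightarrow> pendant_path E (insert w K) w"

lemma pendant_path_finite: "pendant_path E K w \<Longrightarrow> finite K"
  by (induction rule: pendant_path.induct) simp_all

lemma pendant_path_end: "pendant_path E K w \<Longrightarrow> w \<in> K"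
  by (induction rule: pendant_path.induct) simp_all

lemma diss_number_pendant_path:
  assumes sym: "symp E" and irr: "irreflp E" and "pendant_path E K w"
  shows "diss_number E K = path_diss_num (card K)
    \<and> diss_number E (K - {w}) = path_diss_num (card K - 1)
    \<and> diss_number E (K - insert w {y. E w y}) = path_diss_num (card K - 2)"
  using assms(3)
proof (induction rule: pendant_path.induct)
  case (singleton w)
  have "{w} - insert w {y. E w y} = {}"
    by blast
  then show ?case
    using sym by simp
next
  case (extend K u w)
  have fin: "finite K" and "u \<in> K"
    using extend.hyps(1) by (rule pendant_path_finite, rule pendant_path_end)
  then have m: "1 \<le> card K"
    by (simp add: Suc_le_eq card_gt_0_iff) blast
  have "insert w K - insert w {y. E w y} = K - {u}"
    using extend.hyps(2,3) by blast
  moreover have "diss_number E (insert w K) = path_diss_num (Suc (card K))"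
    unfolding diss_number_insert_pendant[OF sym irr fin \<open>u \<in> K\<close> extend.hyps(2,3)]
      path_diss_num_Suc[OF m]
    using extend.IH by simp
  moreover have "card (insert w K) = Suc (card K)" "insert w K - {w} = K"
    using extend.hyps(2) fin by auto
  ultimately show ?case
    using extend.IH by simp
qed

section \<open>Connected graphs of maximum degree two\<close>

lemma degree_mono:
  "finite K \<Longrightarrow> K' \<subseteq> K \<Longrightarrow> degree K' E x \<le> degree K E x"
  unfolding degree_def by (rule card_mono) auto

lemma degree_Diff_neighbour:
  assumes "finite K" "w \<in> K" "E x w"
  shows "degree (K - {w}) E x = degree K E x - 1"
proof -
  have "{y \<in> K - {w}. E x y} = {y \<in> K. E x y} - {w}"
    by blast
  then show ?thesis
    using assms unfolding degree_def by simp
qed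

lemma reach_in_sym:
  assumes "symp E" "reach_in S E a b"
  shows "reach_in S E b a"
  using assms(2) unfolding reach_in_def
proof (induction rule: rtranclp_induct)
  case (step y z)
  have "(\<lambda>x y. x \<in> S \<and> y \<in> S \<and> E x y) z y"
    using step.hyps(2) assms(1) by (blast dest: sympD)
  then show ?case
    using step.IH by (rule converse_rtranclp_into_rtranclp)
qed simp

lemma reach_in_closed_subset:
  assumes "reach_in S E a b" "a \<in> A" "A \<subseteq> S" "\<And>x y. x \<in> A \<Longrightarrow> y \<in> S \<Longrightarrow> E x y \<Longrightarrow> y \<in> A"
  shows "reach_in A E a b"
proof -
  have "b \<in> A \<and> reach_in A E a b"
    using assms(1) unfolding reach_in_def
  proof (induction rule: rtranclp_induct)
    case (step y z)
    then have "z \<in> A"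
      using assms(4) by blast
    with step show ?case
      using rtranclp.rtrancl_into_rtrancl[of "\<lambda>x y. x \<in> A \<and> y \<in> A \<and> E x y" a y z] by blast
  qed (use assms(2) in simp)
  then show ?thesis ..
qed

lemma reach_in_delete_pendant:
  assumes "reach_in K E w x" "x \<noteq> w" "u \<in> K - {w}" "\<forall>y\<in>K. E w y \<longleftrightarrow> y = u"
  shows "reach_in (K - {w}) E u x"
proof -
  have "x \<noteq> w \<longrightarrow> reach_in (K - {w}) E u x"
    using assms(1) unfolding reach_in_def
  proof (induction rule: rtranclp_induct)
    case (step y z)
    show ?case
    proof
      assume "z \<noteq> w"
      show "(\<lambda>a b. a \<in> K - {w} \<and> b \<in> K - {w} \<and> E a b)\<^sup>*\<^sup>* u z"
      proof (cases "y = w")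
        case True
        with step.hyps(2) assms(4) have "z = u"
          by blast
        then show ?thesis
          by simp
      next
        case False
        with step \<open>z \<noteq> w\<close> show ?thesis
          by (simp add: rtranclp.rtrancl_into_rtrancl)
      qed
    qed
  qed simp
  with assms(2) show ?thesis by blast
qed

lemma delete_end_of_path_graph:
  assumes sym: "symp E" and irr: "irreflp E" and fin: "finite K" and "w \<in> K" "K \<noteq> {w}"
    and reach: "\<forall>x\<in>K. reach_in K E w x" and deg: "degree K E w \<le> 1" "\<forall>x\<in>K. degree K E x \<le> 2"
  obtains u where "u \<in> K - {w}" "\<forall>y\<in>K. E w y \<longleftrightarrow> y = u"
    "\<forall>x\<in>K - {w}. reach_in (K - {w}) E u x" "degree (K - {w}) E u \<le> 1"
proof -
  obtain x where x: "x \<in> K" "x \<noteq> w"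
    using \<open>w \<in> K\<close> \<open>K \<noteq> {w}\<close> by blast
  have "(\<lambda>a b. a \<in> K \<and> b \<in> K \<and> E a b)\<^sup>*\<^sup>* w x"
    using reach x(1) unfolding reach_in_def by blast
  then obtain u where u: "u \<in> K" "E w u"
    using x(2) by (cases rule: converse_rtranclpE) auto
  have adj_w: "\<forall>y\<in>K. E w y \<longleftrightarrow> y = u"
    using fin deg(1) u card_le_Suc0_iff_eq[of "{y \<in> K. E w y}"] unfolding degree_def by auto
  have "u \<noteq> w"
    using irr u(2) by (auto dest: irreflpD)
  then have "u \<in> K - {w}"
    using u(1) by blast
  moreover have "\<forall>x\<in>K - {w}. reach_in (K - {w}) E u x"
    using reach \<open>u \<in> K - {w}\<close> adj_w by (blast intro: reach_in_delete_pendant)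
  moreover have "E u w"
    using sym u(2) by (rule sympD)
  then have "degree (K - {w}) E u \<le> 1"
    using degree_Diff_neighbour[OF fin \<open>w \<in> K\<close>] deg(2) u(1) by fastforce
  ultimately show ?thesis
    using adj_w that by blast
qed

lemma pendant_pathI:
  assumes "symp E" "irreflp E"
  shows "finite K \<Longrightarrow> w \<in> K \<Longrightarrow> \<forall>x\<in>K. reach_in K E w x \<Longrightarrow> \<forall>x\<in>K. degree K E x \<le> 2
    \<Longrightarrow> degree K E w \<le> 1 \<Longrightarrow> pendant_path E K w"
proof (induction "card K" arbitrary: K w)
  case 0
  then show ?case by auto
next
  case (Suc n)
  show ?case
  proof (cases "K = {w}")
    case True
    then show ?thesis by (simp add: pendant_path.singleton)
  next
    case False
    obtain u where u: "u \<in> K - {w}" "\<forall>y\<in>K. E w y \<longleftrightarrow> y = u"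
      "\<forall>x\<in>K - {w}. reach_in (K - {w}) E u x" "degree (K - {w}) E u \<le> 1"
      by (rule delete_end_of_path_graph[OF assms Suc.prems(1,2) False Suc.prems(3,5,4)])
    have "\<forall>x\<in>K - {w}. degree (K - {w}) E x \<le> 2"
      using Suc.prems(4) degree_mono[OF Suc.prems(1) Diff_subset] by (meson DiffD1 le_trans)
    then have "pendant_path E (K - {w}) u"
      using Suc u by (intro Suc.hyps) auto
    moreover have "insert w (K - {w}) = K"
      using Suc.prems(2) by blast
    ultimately show ?thesis
      using pendant_path.extend[of E "K - {w}" u w] u(2) by auto
  qed
qed

section \<open>Rooted trees\<close>

lemma rtrancl_path_induced:
  assumes "rtrancl_path (\<lambda>a b. a \<in> S \<and> b \<in> S \<and> E a b) x xs y" "x \<in> S"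
  shows "set (x # xs) \<subseteq> S \<and> last (x # xs) = y
    \<and> (\<forall>i. Suc i < length (x # xs) \<longrightarrow> E ((x # xs) ! i) ((x # xs) ! Suc i))"
  using assms
proof (induction rule: rtrancl_path.induct)
  case (step x y ys z)
  then have IH: "set (y # ys) \<subseteq> S \<and> last (y # ys) = z
      \<and> (\<forall>i. Suc i < length (y # ys) \<longrightarrow> E ((y # ys) ! i) ((y # ys) ! Suc i))"
    by simp
  show ?case
  proof (intro conjI allI impI)
    show "set (x # y # ys) \<subseteq> S" "last (x # y # ys) = z"
      using IH step.hyps(1) by auto
    fix i assume "Suc i < length (x # y # ys)"
    with IH step.hyps(1) show "E ((x # y # ys) ! i) ((x # y # ys) ! Suc i)"
      by (cases i) auto
  qed
qed simp

lemma is_cycle_if_reach_in: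
  assumes "reach_in S E a b" "a \<noteq> b" "S \<subseteq> V - {v}" "v \<in> V" "a \<in> S" "E v a" "E b v"
  shows "\<exists>cs. is_cycle V E cs"
proof -
  obtain xs where path: "rtrancl_path (\<lambda>x y. x \<in> S \<and> y \<in> S \<and> E x y) a xs b"
    and dist: "distinct (a # xs)"
    using assms(1) unfolding reach_in_def rtranclp_eq_rtrancl_path
    by (blast elim: rtrancl_path_distinct)
  note p = rtrancl_path_induced[OF path assms(5)]
  have "xs \<noteq> []"
    using p assms(2) by auto
  have "is_cycle V E (v # a # xs)"
    unfolding is_cycle_def
  proof (intro conjI allI impI)
    show "3 \<le> length (v # a # xs)"
      using \<open>xs \<noteq> []\<close> by (cases xs) auto
    show "distinct (v # a # xs)" "set (v # a # xs) \<subseteq> V"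
      using p dist assms(3,4) by auto
    fix i assume "Suc i < length (v # a # xs)"
    with p assms(6) show "E ((v # a # xs) ! i) ((v # a # xs) ! Suc i)"
      by (cases i) auto
  next
    show "E (last (v # a # xs)) (hd (v # a # xs))"
      using p assms(7) by simp
  qed
  then show ?thesis ..
qed

locale rooted_tree =
  fixes V :: "'a set" and E :: "'a \<Rightarrow> 'a \<Rightarrow> bool" and v :: 'a
  assumes tree: "is_tree V E" and root: "v \<in> V"
begin

abbreviation subtree :: "'a \<Rightarrow> 'a set" where
  "subtree \<equiv> subtree_child V E v"

lemma finite_V: "finite V"
  and adj_in_V: "E x y \<Longrightarrow> x \<in> V \<and> y \<in> V"
  and symp_E: "symp E"
  and irreflp_E: "irreflp E"
  and connected: "x \<in> V \<Longrightarrow> y \<in> V \<Longrightarrow> reach_in V E x y"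
  and acyclic: "\<not> is_cycle V E cs"
  using tree unfolding is_tree_def simple_graph_def connected_graph_def
  by (auto simp: symp_def irreflp_def)

lemma children_iff: "w \<in> children V E v \<longleftrightarrow> E v w"
  using adj_in_V by (auto simp: children_def)

lemma subtree_subset: "subtree w \<subseteq> V - {v}"
  by (auto simp: subtree_child_def)

lemma finite_subtree: "finite (subtree w)"
  using finite_V subtree_subset finite_subset by blast

lemma child_in_subtree: "w \<in> children V E v \<Longrightarrow> w \<in> subtree w"
  using irreflp_E by (auto simp: subtree_child_def children_def reach_in_def dest: irreflpD)

lemma subtree_closed: "x \<in> subtree w \<Longrightarrow> E x y \<Longrightarrow> y \<noteq> v \<Longrightarrow> y \<in> subtree w"
  using adj_in_V unfolding subtree_child_def reach_in_def
  by (auto intro: rtranclp.rtrancl_into_rtrancl)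

lemma subtrees_disjoint:
  assumes "w1 \<in> children V E v" "w2 \<in> children V E v" "w1 \<noteq> w2"
  shows "subtree w1 \<inter> subtree w2 = {}"
proof (rule ccontr)
  assume "subtree w1 \<inter> subtree w2 \<noteq> {}"
  then obtain u where "reach_in (V - {v}) E w1 u" "reach_in (V - {v}) E w2 u"
    by (auto simp: subtree_child_def)
  then have "reach_in (V - {v}) E w1 w2"
    using reach_in_sym[OF symp_E] unfolding reach_in_def by (meson rtranclp_trans)
  moreover have "E v w1" "E w2 v"
    using assms(1,2) symp_E by (auto simp: children_iff dest: sympD)
  moreover have "w1 \<in> V - {v}"
    using assms(1) child_in_subtree subtree_subset by blast
  ultimately have "\<exists>cs. is_cycle V E cs"
    using is_cycle_if_reach_in[of "V - {v}" E w1 w2 V v] assms(3) root by blast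
  with acyclic show False by blast
qed

lemma subtrees_cover: "V - {v} = (\<Union>w\<in>children V E v. subtree w)"
proof
  show "(\<Union>w\<in>children V E v. subtree w) \<subseteq> V - {v}"
    using subtree_subset by blast
  have "u \<noteq> v \<longrightarrow> (\<exists>w\<in>children V E v. u \<in> subtree w)" if "u \<in> V" for u
    using connected[OF root that] unfolding reach_in_def
  proof (induction rule: rtranclp_induct)
    case (step y z)
    show ?case
    proof
      assume "z \<noteq> v"
      show "\<exists>w\<in>children V E v. z \<in> subtree w"
      proof (cases "y = v")
        case True
        then show ?thesis
          using step.hyps(2) child_in_subtree children_iff by blast
      next
        case False
        then show ?thesis
          using step subtree_closed \<open>z \<noteq> v\<close> by blast
      qed
    qed
  qed simp
  then show "V - {v} \<subseteq> (\<Union>w\<in>children V E v. subtree w)"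
    by blast
qed

lemma subtree_adj_root:
  assumes "w \<in> children V E v" "x \<in> subtree w" "E x v"
  shows "x = w"
proof (rule ccontr)
  assume "x \<noteq> w"
  have "x \<in> children V E v"
    using assms(3) symp_E by (auto simp: children_iff dest: sympD)
  then show False
    using subtrees_disjoint[OF assms(1)] child_in_subtree assms(2) \<open>x \<noteq> w\<close> by blast
qed

lemma subtree_adj:
  assumes "i \<in> children V E v" "j \<in> children V E v" "x \<in> subtree i" "y \<in> subtree j" "E x y"
  shows "i = j"
proof -
  have "y \<in> subtree i"
    using assms subtree_closed subtree_subset by blast
  then show ?thesis
    using subtrees_disjoint assms(1,2,4) by blast
qed

lemma reach_in_subtree:
  assumes "w \<in> children V E v" "x \<in> subtree w"
  shows "reach_in (subtree w) E w x"
proof (rule reach_in_closed_subset)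
  show "reach_in (V - {v}) E w x"
    using assms(2) by (simp add: subtree_child_def)
  show "w \<in> subtree w" "subtree w \<subseteq> V - {v}"
    using assms(1) by (rule child_in_subtree) (rule subtree_subset)
  show "\<And>x y. x \<in> subtree w \<Longrightarrow> y \<in> V - {v} \<Longrightarrow> E x y \<Longrightarrow> y \<in> subtree w"
    using subtree_closed by blast
qed

lemma card_UN_subtrees:
  assumes "\<And>w. w \<in> children V E v \<Longrightarrow> G w \<subseteq> subtree w"
  shows "card (\<Union>w\<in>children V E v. G w) = (\<Sum>w\<in>children V E v. card (G w))"
proof (rule card_UN_disjoint)
  show "finite (children V E v)"
    using finite_V by (simp add: children_def)
  show "\<forall>w\<in>children V E v. finite (G w)"
    using assms finite_subtree finite_subset by blast
  show "\<forall>i\<in>children V E v. \<forall>j\<in>children V E v. i \<noteq> j \<longrightarrow> G i \<inter> G j = {}"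
    using assms subtrees_disjoint by blast
qed

lemma finite_children: "finite (children V E v)"
  using finite_V by (simp add: children_def)

lemma finite_children_mod: "finite (children_mod V E v i)"
  using finite_children by (simp add: children_mod_def)

lemma card_subtree_ge_1: "w \<in> children V E v \<Longrightarrow> 1 \<le> card (subtree w)"
  using child_in_subtree finite_subtree by (metis One_nat_def Suc_leI card_gt_0_iff empty_iff)

lemma card_eq_sum_subtrees:
  assumes "F \<subseteq> V - {v}"
  shows "card F = (\<Sum>w\<in>children V E v. card (F \<inter> subtree w))"
proof -
  have "F = (\<Union>w\<in>children V E v. F \<inter> subtree w)"
    using assms subtrees_cover by blast
  then show ?thesis
    using card_UN_subtrees[of "\<lambda>w. F \<inter> subtree w"] by simp
qed

lemma dissociated_UN_subtrees:
  assumes "\<And>w. w \<in> children V E v \<Longrightarrow> G w \<subseteq> subtree w \<and> dissociated E (G w)"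
  shows "dissociated E (\<Union>w\<in>children V E v. G w)"
  using finite_children assms subtree_adj by (intro dissociated_UN) blast+

lemma dissociated_insert_root:
  assumes G: "\<And>w. w \<in> children V E v \<Longrightarrow> G w \<subseteq> subtree w \<and> dissociated E (G w)"
    and isolated: "\<And>w y. w \<in> children V E v \<Longrightarrow> w \<in> G w \<Longrightarrow> y \<in> G w \<Longrightarrow> \<not> E w y"
    and unique: "\<And>w w'. w \<in> children V E v \<Longrightarrow> w' \<in> children V E v \<Longrightarrow> w \<in> G w \<Longrightarrow> w' \<in> G w'
      \<Longrightarrow> w = w'"
  shows "dissociated E (insert v (\<Union>w\<in>children V E v. G w))"
proof -
  let ?U = "\<Union>w\<in>children V E v. G w"
  have U: "dissociated E ?U"
    using G by (rule dissociated_UN_subtrees)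
  have root_adj: "y = w \<and> w \<in> G w" if "w \<in> children V E v" "y \<in> G w" "E v y" for w y
    using that G[OF that(1)] subtree_adj_root symp_E by (blast dest: sympD)
  show ?thesis
  proof (cases "\<exists>w0\<in>children V E v. w0 \<in> G w0")
    case True
    then obtain w0 where w0: "w0 \<in> children V E v" "w0 \<in> G w0" by blast
    have "\<forall>y\<in>?U. \<not> E w0 y"
    proof
      fix y assume "y \<in> ?U"
      then obtain w where w: "w \<in> children V E v" "y \<in> G w" by blast
      show "\<not> E w0 y"
      proof
        assume "E w0 y"
        then have "w0 = w"
          using G w w0 subtree_adj by blast
        with isolated w w0 \<open>E w0 y\<close> show False by blast
      qed
    qed
    moreover have "\<forall>y\<in>?U. E v y \<longrightarrow> y = w0"
      using root_adj unique w0 by blast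
    ultimately show ?thesis
      using w0 by (intro dissociated_insert_pendant[OF symp_E irreflp_E U]) blast+
  next
    case False
    then have "\<forall>y\<in>?U. \<not> E v y"
      using root_adj by blast
    then show ?thesis
      by (rule dissociated_insert_isolated[OF symp_E U])
  qed
qed

end

section \<open>Spiders\<close>

locale spider = rooted_tree +
  assumes degree_le_2: "\<forall>u \<in> V - {v}. degree V E u \<le> 2"
begin

lemma pendant_path_subtree:
  assumes "w \<in> children V E v"
  shows "pendant_path E (subtree w) w"
proof (rule pendant_pathI[OF symp_E irreflp_E finite_subtree child_in_subtree[OF assms]])
  show "\<forall>x\<in>subtree w. reach_in (subtree w) E w x"
    using reach_in_subtree[OF assms] by blast
  have fin: "finite (V - {v})"
    using finite_V by simp
  have deg: "degree (subtree w) E x \<le> degree (V - {v}) E x" for x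
    using degree_mono[OF fin subtree_subset] .
  have "degree (V - {v}) E x \<le> degree V E x" for x
    using degree_mono[OF finite_V Diff_subset] .
  then show "\<forall>x\<in>subtree w. degree (subtree w) E x \<le> 2"
    using deg degree_le_2 subtree_subset by (meson in_mono le_trans)
  have "w \<in> V - {v}" "E w v"
    using assms child_in_subtree subtree_subset symp_E by (auto simp: children_iff dest: sympD)
  then have "degree (V - {v}) E w = degree V E w - 1" "degree V E w \<le> 2"
    using degree_Diff_neighbour[OF finite_V root] degree_le_2 by blast+
  then show "degree (subtree w) E w \<le> 1"
    using deg[of w] by linarith
qed

lemma diss_number_subtree:
  assumes "w \<in> children V E v"
  shows "diss_number E (subtree w) = path_diss_num (card (subtree w))"
    and "diss_number E (subtree w - {w}) = path_diss_num (card (subtree w) - 1)"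
    and "diss_number E (subtree w - insert w {y. E w y}) = path_diss_num (card (subtree w) - 2)"
  using diss_number_pendant_path[OF symp_E irreflp_E pendant_path_subtree[OF assms]] by simp_all


definition pruned_sum :: nat where
  "pruned_sum = (\<Sum>w\<in>children V E v. path_diss_num (card (subtree w) - 1))"

lemma sum_path_diss_num_subtrees:
  "(\<Sum>w\<in>children V E v. path_diss_num (card (subtree w)))
     = pruned_sum + card (children_mod V E v 1) + card (children_mod V E v 2)"
proof -
  have "(\<Sum>w\<in>children V E v. path_diss_num (card (subtree w)))
      = (\<Sum>w\<in>children V E v. path_diss_num (card (subtree w) - 1) + of_bool (card (subtree w) mod 3 \<noteq> 0))"
    using path_diss_num_diff1 card_subtree_ge_1 by (intro sum.cong) auto
  also have "\<dots> = pruned_sum + card {w \<in> children V E v. card (subtree w) mod 3 \<noteq> 0}"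
    using finite_children by (simp add: sum.distrib pruned_sum_def Int_def)
  also have "{w \<in> children V E v. card (subtree w) mod 3 \<noteq> 0}
      = children_mod V E v 1 \<union> children_mod V E v 2"
    unfolding children_mod_def by auto
  finally show ?thesis
    using finite_children_mod by (simp add: card_Un_disjoint children_mod_def disjoint_iff)
qed

lemma card_avoiding_root_le:
  assumes "dissociation_set V E F" "v \<notin> F"
  shows "card F \<le> (\<Sum>w\<in>children V E v. path_diss_num (card (subtree w)))"
proof -
  have F: "F \<subseteq> V - {v}" "dissociated E F"
    using assms finite_V dissociation_set_iff by blast+
  have "card F = (\<Sum>w\<in>children V E v. card (F \<inter> subtree w))"
    using F(1) by (rule card_eq_sum_subtrees)
  also have "\<dots> \<le> (\<Sum>w\<in>children V E v. diss_number E (subtree w))"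
  proof (rule sum_mono)
    fix w
    have "dissociated E (F \<inter> subtree w)"
      using F(2) by (rule dissociated_subset) blast
    then show "card (F \<inter> subtree w) \<le> diss_number E (subtree w)"
      by (intro diss_number_ge[OF finite_subtree]) auto
  qed
  finally show ?thesis
    using diss_number_subtree(1) by simp
qed

lemma exists_avoiding_root:
  "\<exists>F. dissociation_set V E F \<and> v \<notin> F
     \<and> card F = (\<Sum>w\<in>children V E v. path_diss_num (card (subtree w)))"
proof -
  have "\<forall>w\<in>children V E v. \<exists>S. S \<subseteq> subtree w \<and> dissociated E S \<and> card S = diss_number E (subtree w)"
    using diss_number_witness[OF finite_subtree] by metis
  then obtain S where S: "\<And>w. w \<in> children V E v
      \<Longrightarrow> S w \<subseteq> subtree w \<and> dissociated E (S w) \<and> card (S w) = diss_number E (subtree w)"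
    by metis
  have "dissociation_set V E (\<Union>w\<in>children V E v. S w)"
    using S subtree_subset finite_V by (auto simp: dissociation_set_iff intro!: dissociated_UN_subtrees)
  moreover have "v \<notin> (\<Union>w\<in>children V E v. S w)"
    using S subtree_subset by blast
  moreover have "card (\<Union>w\<in>children V E v. S w) = (\<Sum>w\<in>children V E v. path_diss_num (card (subtree w)))"
    using S card_UN_subtrees[of S] diss_number_subtree(1) by simp
  ultimately show ?thesis by blast
qed

lemma card_inter_subtree_le:
  assumes F: "dissociated E F" "v \<in> F" and w: "w \<in> children V E v"
  shows "card (F \<inter> subtree w)
    \<le> path_diss_num (card (subtree w) - 1) + of_bool (w \<in> F \<and> card (subtree w) mod 3 = 1)"
proof (cases "w \<in> F")
  case True
  \<comment> \<open>\<open>v\<close> is the partner of \<open>w\<close> in \<open>F\<close>, so no neighbour of \<open>w\<close> in the subtree lies in \<open>F\<close>.\<close>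
  have "E w v"
    using w symp_E by (auto simp: children_iff dest: sympD)
  have "F \<inter> subtree w - {w} \<subseteq> subtree w - insert w {y. E w y}"
  proof
    fix y assume y: "y \<in> F \<inter> subtree w - {w}"
    have "y \<noteq> v"
      using y subtree_subset by blast
    then have "\<not> E w y"
      using dissociated_partner_unique[OF F(1) True F(2) \<open>E w v\<close>, of y] y by blast
    with y show "y \<in> subtree w - insert w {y. E w y}"
      by blast
  qed
  moreover have "dissociated E (F \<inter> subtree w - {w})"
    using F(1) by (rule dissociated_subset) blast
  ultimately have "card (F \<inter> subtree w - {w}) \<le> diss_number E (subtree w - insert w {y. E w y})"
    using finite_subtree by (intro diss_number_ge) auto
  then have "card (F \<inter> subtree w - {w}) \<le> path_diss_num (card (subtree w) - 2)"
    using diss_number_subtree(3)[OF w] by simp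
  moreover have "card (F \<inter> subtree w) = Suc (card (F \<inter> subtree w - {w}))"
    using True child_in_subtree[OF w] finite_subtree by (intro card.remove) auto
  ultimately show ?thesis
    using True path_diss_num_diff2[OF card_subtree_ge_1[OF w]] by simp
next
  case False
  then have "F \<inter> subtree w \<subseteq> subtree w - {w}" "dissociated E (F \<inter> subtree w)"
    using dissociated_subset[OF F(1)] by blast+
  then have "card (F \<inter> subtree w) \<le> diss_number E (subtree w - {w})"
    using finite_subtree by (intro diss_number_ge) auto
  then show ?thesis
    using diss_number_subtree(2)[OF w] False by simp
qed

lemma card_containing_root_le:
  assumes "dissociation_set V E F" "v \<in> F"
  shows "card F \<le> Suc (pruned_sum + of_bool (card (children_mod V E v 1) \<noteq> 0))"
proof -
  have F: "F \<subseteq> V" "dissociated E F"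
    using assms finite_V dissociation_set_iff by blast+
  define Z where "Z = {w \<in> children V E v. w \<in> F \<and> card (subtree w) mod 3 = 1}"
  have "Z \<subseteq> {y \<in> F. E v y}"
    unfolding Z_def by (auto simp: children_iff)
  moreover have "finite {y \<in> F. E v y}" "card {y \<in> F. E v y} \<le> 1"
    using F(2) assms(2) by (auto simp: dissociated_def)
  ultimately have "card Z \<le> 1"
    using card_mono le_trans by blast
  moreover have "card Z \<le> card (children_mod V E v 1)"
    using finite_children_mod by (intro card_mono) (auto simp: Z_def children_mod_def)
  ultimately have Z: "card Z \<le> of_bool (card (children_mod V E v 1) \<noteq> 0)"
    by auto
  have "card F = Suc (card (F - {v}))"
    using assms(2) F(1) finite_V finite_subset by (intro card.remove) auto
  also have "card (F - {v}) = (\<Sum>w\<in>children V E v. card (F \<inter> subtree w))"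
  proof -
    have "(F - {v}) \<inter> subtree w = F \<inter> subtree w" for w
      using subtree_subset by blast
    then show ?thesis
      using F(1) card_eq_sum_subtrees[of "F - {v}"] by auto
  qed
  also have "\<dots> \<le> (\<Sum>w\<in>children V E v.
      path_diss_num (card (subtree w) - 1) + of_bool (w \<in> F \<and> card (subtree w) mod 3 = 1))"
    using card_inter_subtree_le[OF F(2) assms(2)] by (rule sum_mono)
  also have "\<dots> = pruned_sum + card Z"
    using finite_children by (simp add: sum.distrib pruned_sum_def Z_def Int_def)
  finally show ?thesis
    using Z by simp
qed

lemma obtain_sets_avoiding_children:
  obtains T where "\<And>w. w \<in> children V E v \<Longrightarrow> T w \<subseteq> subtree w - {w} \<and> dissociated E (T w)
    \<and> card (T w) = path_diss_num (card (subtree w) - 1)"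
proof -
  have "\<exists>S. S \<subseteq> subtree w - {w} \<and> dissociated E S \<and> card S = path_diss_num (card (subtree w) - 1)"
    if "w \<in> children V E v" for w
    using diss_number_witness[of "subtree w - {w}"] finite_subtree diss_number_subtree(2)[OF that]
    by (metis finite_Diff)
  with that show ?thesis
    by metis
qed

lemma obtain_sets_isolating_children:
  obtains U where "\<And>w. w \<in> children V E v \<Longrightarrow> U w \<subseteq> subtree w \<and> dissociated E (U w)
    \<and> w \<in> U w \<and> (\<forall>y\<in>U w. \<not> E w y) \<and> card (U w) = Suc (path_diss_num (card (subtree w) - 2))"
proof -
  have "\<exists>U. U \<subseteq> subtree w \<and> dissociated E U \<and> w \<in> U \<and> (\<forall>y\<in>U. \<not> E w y)
      \<and> card U = Suc (path_diss_num (card (subtree w) - 2))" if w: "w \<in> children V E v" for w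
  proof -
    obtain S where S: "S \<subseteq> subtree w - insert w {y. E w y}" "dissociated E S"
      "card S = path_diss_num (card (subtree w) - 2)"
      using diss_number_witness[of "subtree w - insert w {y. E w y}"] finite_subtree
        diss_number_subtree(3)[OF w] by (metis finite_Diff)
    have "finite S" "w \<notin> S"
      using S(1) finite_subtree finite_subset by blast+
    moreover have "\<forall>y\<in>insert w S. \<not> E w y"
      using S(1) irreflp_E by (auto dest: irreflpD)
    moreover have "dissociated E (insert w S)"
      using S(1) by (intro dissociated_insert_isolated[OF symp_E S(2)]) blast
    ultimately show ?thesis
      using S(1,3) child_in_subtree[OF w] by (intro exI[of _ "insert w S"]) auto
  qed
  with that show ?thesis
    by metis
qed

lemma exists_containing_root:
  assumes Z: "Z \<subseteq> children_mod V E v 1" "card Z \<le> 1"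
  shows "\<exists>F. dissociation_set V E F \<and> v \<in> F \<and> card F = Suc (pruned_sum + card Z)"
proof -
  obtain T where T: "\<And>w. w \<in> children V E v \<Longrightarrow> T w \<subseteq> subtree w - {w} \<and> dissociated E (T w)
      \<and> card (T w) = path_diss_num (card (subtree w) - 1)"
    using obtain_sets_avoiding_children by blast
  obtain U where U: "\<And>w. w \<in> children V E v \<Longrightarrow> U w \<subseteq> subtree w \<and> dissociated E (U w)
      \<and> w \<in> U w \<and> (\<forall>y\<in>U w. \<not> E w y) \<and> card (U w) = Suc (path_diss_num (card (subtree w) - 2))"
    using obtain_sets_isolating_children by blast
  \<comment> \<open>A child in \<open>Z\<close> is kept as the partner of \<open>v\<close>; every other child is left out.\<close>
  define G where "G w = (if w \<in> Z then U w else T w)" for w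
  have G: "G w \<subseteq> subtree w \<and> dissociated E (G w)" if "w \<in> children V E v" for w
    using T[OF that] U[OF that] by (auto simp: G_def)
  have Z_unique: "w = w'" if "w \<in> Z" "w' \<in> Z" for w w'
    using Z finite_subset[OF Z(1) finite_children_mod] that card_le_Suc0_iff_eq[of Z] by auto
  let ?B = "\<Union>w\<in>children V E v. G w"
  have "dissociated E (insert v ?B)"
    using G by (rule dissociated_insert_root) (use T U Z_unique in \<open>auto simp: G_def split: if_splits\<close>)
  have "card (G w) = path_diss_num (card (subtree w) - 1) + of_bool (w \<in> Z)"
    if "w \<in> children V E v" for w
    using T[OF that] U[OF that] Z(1) path_diss_num_diff2[OF card_subtree_ge_1[OF that]]
    by (auto simp: G_def children_mod_def)
  then have "card ?B = pruned_sum + card Z"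
    using card_UN_subtrees[of G] G Z(1) finite_children
    by (simp add: sum.distrib pruned_sum_def Int_absorb1 children_mod_def subset_iff)
  moreover have "insert v ?B \<subseteq> V" "v \<notin> ?B"
    using G subtree_subset root by blast+
  moreover have "finite ?B"
    using finite_subset[OF _ finite_V] \<open>insert v ?B \<subseteq> V\<close> by blast
  ultimately show ?thesis
    using \<open>dissociated E (insert v ?B)\<close> dissociation_set_iff[OF finite_V]
    by (intro exI[of _ "insert v ?B"]) auto
qed

lemma max_diss_card_avoiding_root:
  "max_diss_card V E (\<lambda>F. v \<notin> F)
     (pruned_sum + card (children_mod V E v 1) + card (children_mod V E v 2))"
  using card_avoiding_root_le exists_avoiding_root
  unfolding max_diss_card_def sum_path_diss_num_subtrees by blast

lemma max_diss_card_containing_root: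
  "max_diss_card V E (\<lambda>F. v \<in> F) (Suc (pruned_sum + of_bool (card (children_mod V E v 1) \<noteq> 0)))"
proof -
  obtain Z where "Z \<subseteq> children_mod V E v 1" "card Z = of_bool (card (children_mod V E v 1) \<noteq> 0)"
  proof (cases "card (children_mod V E v 1) = 0")
    case True
    then show ?thesis
      using that[of "{}"] by simp
  next
    case False
    then obtain w0 where "w0 \<in> children_mod V E v 1"
      by (metis card.empty ex_in_conv)
    then show ?thesis
      using that[of "{w0}"] False by simp
  qed
  then have "\<exists>F. dissociation_set V E F \<and> v \<in> F
      \<and> card F = Suc (pruned_sum + of_bool (card (children_mod V E v 1) \<noteq> 0))"
    using exists_containing_root[of Z] by simp
  then show ?thesis
    using card_containing_root_le unfolding max_diss_card_def by blast
qed

end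

theorem theorem2p1:
  fixes V :: "'a set" and E :: "'a \<Rightarrow> 'a \<Rightarrow> bool" and v :: 'a
  assumes "is_tree V E" and "v \<in> V"
    and "\<forall>u \<in> V - {v}. degree V E u \<le> 2"
  shows "(v \<in> diss_A V E \<longleftrightarrow> card (children_mod V E v 2) = 0 \<and> card (children_mod V E v 1) \<le> 1)
       \<and> (v \<in> diss_N V E \<longleftrightarrow> card (children_mod V E v 2) = 2
            \<or> card (children_mod V E v 1) + card (children_mod V E v 2) \<ge> 3)"
proof -
  interpret spider V E v
    using assms by unfold_locales
  note A = mem_diss_A_iff[OF assms(2) max_diss_card_avoiding_root max_diss_card_containing_root]
  note N = mem_diss_N_iff[OF assms(2) max_diss_card_avoiding_root max_diss_card_containing_root]
  show ?thesis
    unfolding A N by auto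
qed

end
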